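(* Let $\mathbb{K}=(G,M,I)$ be a formal context and $A,B\in\operatorname{Ext}(\mathbb{K})$ with $A\prec_{\operatorname{Ext}(\mathbb{K})}B$. If $A$ is meet-irreducible in $\operatorname{Ext}(\mathbb{K})$, then $\mathcal{F}_{A,B}\cap\operatorname{Ext}(\mathbb{K})$ is a maximal meet-irreducible element of the lattice ${\downarrow}\operatorname{Ext}(\mathbb{K})$ of all closure systems on $G$ contained in $\operatorname{Ext}(\mathbb{K})$, ordered by inclusion.
   Context: A formal context is a triple $(G,M,I)$ with finite nonempty sets $G$, $M$ and $I\subseteq G\times M$; derivations $A'=\{m\mid\forall a\in A:(a,m)\in I\}$, $B'=\{g\mid\forall b\in B:(g,b)\in I\}$. $\operatorname{Ext}(\mathbb{K})=\{A\subseteq G\mid A''=A\}$, a lattice under inclusion with meet = intersection. A closure system on $G$ is a family of subsets of $G$ containing $G$ and closed under intersections. $\prec_{\operatorname{Ext}(\mathbb{K})}$ is the covering relation of $(\operatorname{Ext}(\mathbb{K}),\subseteq)$. $\mathcal{F}_{A,B}=\{D\subseteq G\mid A\not\subseteq D\ \text{or}\ B\subseteq D\}$. An element $x$ of a lattice is meet-irreducible if $x\neq\top$ and $x=\bigwedge Y$ implies $x\in Y$. *)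

theory Defs
  imports Main
begin

definition formal_context :: "'g set \<Rightarrow> 'm set \<Rightarrow> ('g \<times> 'm) set \<Rightarrow> bool" where
  "formal_context G M I \<longleftrightarrow> finite G \<and> G \<noteq> {} \<and> finite M \<and> M \<noteq> {} \<and> I \<subseteq> G \<times> M"

definition intent :: "'g set \<Rightarrow> 'm set \<Rightarrow> ('g \<times> 'm) set \<Rightarrow> 'g set \<Rightarrow> 'm set" where
  "intent G M I A = {m \<in> M. \<forall>a\<in>A. (a, m) \<in> I}"

definition extent :: "'g set \<Rightarrow> 'm set \<Rightarrow> ('g \<times> 'm) set \<Rightarrow> 'm set \<Rightarrow> 'g set" where
  "extent G M I B = {g \<in> G. \<forall>b\<in>B. (g, b) \<in> I}"

definition Ext :: "'g set \<Rightarrow> 'm set \<Rightarrow> ('g \<times> 'm) set \<Rightarrow> 'g set set" where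
  "Ext G M I = {A. A \<subseteq> G \<and> extent G M I (intent G M I A) = A}"

definition closure_system :: "'g set \<Rightarrow> 'g set set \<Rightarrow> bool" where
  "closure_system G C \<longleftrightarrow> C \<subseteq> Pow G \<and> G \<in> C \<and> (\<forall>S. S \<subseteq> C \<and> S \<noteq> {} \<longrightarrow> \<Inter>S \<in> C)"

definition covers :: "'a set set \<Rightarrow> 'a set \<Rightarrow> 'a set \<Rightarrow> bool" where
  "covers L A B \<longleftrightarrow> A \<in> L \<and> B \<in> L \<and> A \<subset> B \<and> \<not> (\<exists>C\<in>L. A \<subset> C \<and> C \<subset> B)"

definition is_meet :: "'a set set \<Rightarrow> 'a set set \<Rightarrow> 'a set \<Rightarrow> bool" where
  "is_meet L Y x \<longleftrightarrow> x \<in> L \<and> (\<forall>y\<in>Y. x \<subseteq> y) \<and> (\<forall>z\<in>L. (\<forall>y\<in>Y. z \<subseteq> y) \<longrightarrow> z \<subseteq> x)"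

definition is_top :: "'a set set \<Rightarrow> 'a set \<Rightarrow> bool" where
  "is_top L x \<longleftrightarrow> x \<in> L \<and> (\<forall>z\<in>L. z \<subseteq> x)"

definition meet_irreducible :: "'a set set \<Rightarrow> 'a set \<Rightarrow> bool" where
  "meet_irreducible L x \<longleftrightarrow> x \<in> L \<and> \<not> is_top L x \<and> (\<forall>Y. Y \<subseteq> L \<and> is_meet L Y x \<longrightarrow> x \<in> Y)"

definition maximal_meet_irreducible :: "'a set set \<Rightarrow> 'a set \<Rightarrow> bool" where
  "maximal_meet_irreducible L x \<longleftrightarrow> meet_irreducible L x \<and>
     \<not> (\<exists>y. meet_irreducible L y \<and> x \<subset> y)"

definition F_AB :: "'g set \<Rightarrow> 'g set \<Rightarrow> 'g set \<Rightarrow> 'g set set" where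
  "F_AB G A B = {D. D \<subseteq> G \<and> (\<not> A \<subseteq> D \<or> B \<subseteq> D)}"

definition down_Ext :: "'g set \<Rightarrow> 'm set \<Rightarrow> ('g \<times> 'm) set \<Rightarrow> 'g set set set" where
  "down_Ext G M I = {C. closure_system G C \<and> C \<subseteq> Ext G M I}"

end

theory Submission
  imports Defs
begin

text \<open>Because A is covered by B, every extent D with A \<subseteq> D and \<not> B \<subseteq> D satisfies
  D \<inter> B = A, so meet-irreducibility of A forces D = A. Hence F_AB \<inter> Ext(K) is Ext(K) with
  the single extent A removed. In the lattice of closure systems contained in Ext(K), the
  only element strictly above Ext(K) - {A} is the top Ext(K); this makes Ext(K) - {A}
  meet-irreducible, and maximal among such elements since the top is not meet-irreducible.\<close>

lemma closure_system_Int: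
  assumes "closure_system G C" "X \<in> C" "Y \<in> C"
  shows "X \<inter> Y \<in> C"
proof -
  have "{X, Y} \<subseteq> C" "{X, Y} \<noteq> {}"
    using assms(2,3) by simp_all
  then have "\<Inter>{X, Y} \<in> C"
    using assms(1) unfolding closure_system_def by blast
  then show ?thesis by simp
qed

lemma closure_system_Inter:
  assumes "\<And>C. C \<in> Y \<Longrightarrow> closure_system G C" "Y \<noteq> {}"
  shows "closure_system G (\<Inter>Y)"
  unfolding closure_system_def
proof (intro conjI allI impI)
  show "\<Inter>Y \<subseteq> Pow G" "G \<in> \<Inter>Y"
    using assms unfolding closure_system_def by blast+
  fix S assume S: "S \<subseteq> \<Inter>Y \<and> S \<noteq> {}"
  show "\<Inter>S \<in> \<Inter>Y"
  proof
    fix C assume "C \<in> Y"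
    then have "closure_system G C" "S \<subseteq> C"
      using S assms(1) by blast+
    with S show "\<Inter>S \<in> C"
      unfolding closure_system_def by blast
  qed
qed

lemma closure_system_Ext: "closure_system G (Ext G M I)"
proof -
  have "\<Inter>S \<in> Ext G M I" if S: "S \<subseteq> Ext G M I" "S \<noteq> {}" for S
  proof -
    have in_G: "\<Inter>S \<subseteq> G"
      using S unfolding Ext_def by blast
    have "extent G M I (intent G M I (\<Inter>S)) \<subseteq> D" if "D \<in> S" for D
    proof -
      have "extent G M I (intent G M I (\<Inter>S)) \<subseteq> extent G M I (intent G M I D)"
        using that unfolding intent_def extent_def by blast
      also have "\<dots> = D"
        using that S(1) unfolding Ext_def by blast
      finally show ?thesis .
    qed
    moreover have "\<Inter>S \<subseteq> extent G M I (intent G M I (\<Inter>S))"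
      using in_G unfolding extent_def intent_def by blast
    ultimately show ?thesis
      using in_G unfolding Ext_def by blast
  qed
  moreover have "G \<in> Ext G M I" "Ext G M I \<subseteq> Pow G"
    unfolding Ext_def extent_def intent_def by auto
  ultimately show ?thesis
    unfolding closure_system_def by blast
qed

lemma closure_system_F_AB:
  assumes "B \<subseteq> G"
  shows "closure_system G (F_AB G A B)"
  unfolding closure_system_def
proof (intro conjI allI impI)
  show "F_AB G A B \<subseteq> Pow G" "G \<in> F_AB G A B"
    using assms unfolding F_AB_def by blast+
  fix S assume S: "S \<subseteq> F_AB G A B \<and> S \<noteq> {}"
  then have "\<Inter>S \<subseteq> G"
    unfolding F_AB_def by blast
  moreover have "B \<subseteq> \<Inter>S" if "A \<subseteq> \<Inter>S"
    using S that unfolding F_AB_def by blast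
  ultimately show "\<Inter>S \<in> F_AB G A B"
    unfolding F_AB_def by blast
qed

lemma is_meet_Int:
  assumes "X \<in> L" "Y \<in> L" "X \<inter> Y \<in> L"
  shows "is_meet L {X, Y} (X \<inter> Y)"
  using assms unfolding is_meet_def by auto

lemma covers_Int_eq:
  assumes E: "closure_system G E" and cov: "covers E A B"
    and "D \<in> E" "A \<subseteq> D" "\<not> B \<subseteq> D"
  shows "D \<inter> B = A"
proof -
  have "D \<inter> B \<in> E" "D \<inter> B \<subset> B"
    using assms closure_system_Int[OF E] unfolding covers_def by auto
  with cov have "\<not> A \<subset> D \<inter> B"
    unfolding covers_def by blast
  with \<open>A \<subseteq> D\<close> cov show ?thesis
    unfolding covers_def by auto
qed

lemma F_AB_Int_eq_Diff:
  assumes E: "closure_system G E"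
    and cov: "covers E A B"
    and irr: "meet_irreducible E A"
  shows "F_AB G A B \<inter> E = E - {A}"
proof -
  have "A \<in> E" "B \<in> E" "A \<subset> B"
    using cov unfolding covers_def by auto
  have "X \<in> F_AB G A B" if X: "X \<in> E" "X \<noteq> A" for X
  proof (rule ccontr)
    assume "X \<notin> F_AB G A B"
    moreover have "X \<subseteq> G"
      using E X(1) unfolding closure_system_def by auto
    ultimately have "A \<subseteq> X" "\<not> B \<subseteq> X"
      unfolding F_AB_def by auto
    then have "X \<inter> B = A"
      using covers_Int_eq[OF E cov X(1)] by simp
    then have "is_meet E {X, B} A"
      using is_meet_Int[of X E B] X(1) \<open>A \<in> E\<close> \<open>B \<in> E\<close> by simp
    moreover have "{X, B} \<subseteq> E"
      using X(1) \<open>B \<in> E\<close> by simp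
    moreover have "\<forall>Y. Y \<subseteq> E \<and> is_meet E Y A \<longrightarrow> A \<in> Y"
      using irr unfolding meet_irreducible_def by simp
    ultimately have "A \<in> {X, B}"
      by metis
    with X(2) \<open>A \<subset> B\<close> show False
      by auto
  qed
  moreover have "A \<notin> F_AB G A B"
    using \<open>A \<subset> B\<close> unfolding F_AB_def by auto
  ultimately show ?thesis by auto
qed

lemma maximal_meet_irreducible_Diff:
  fixes G :: "'g set" and E :: "'g set set"
  defines "L \<equiv> {C. closure_system G C \<and> C \<subseteq> E}"
  assumes E: "closure_system G E" and "A \<in> E"
    and EA: "closure_system G (E - {A})"
  shows "maximal_meet_irreducible L (E - {A})"
proof -
  have "E \<in> L" "E - {A} \<in> L"
    using E EA unfolding L_def by auto
  have top: "is_top L C \<longleftrightarrow> C = E" for C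
    using \<open>E \<in> L\<close> unfolding is_top_def L_def by auto
  have not_top: "\<not> is_top L (E - {A})"
    using top \<open>A \<in> E\<close> by auto
  have meet_member: "E - {A} \<in> Y" if Y: "Y \<subseteq> L" "is_meet L Y (E - {A})" for Y
  proof -
    have "Y \<noteq> {}"
      using Y(2) \<open>E \<in> L\<close> \<open>A \<in> E\<close> unfolding is_meet_def by auto
    then have "\<Inter>Y \<in> L"
      using Y(1) closure_system_Inter[of Y G] unfolding L_def by auto
    then have "\<Inter>Y \<subseteq> E - {A}"
      using Y(2) unfolding is_meet_def by (simp add: Inter_lower)
    then obtain C where C: "C \<in> Y" "A \<notin> C"
      by auto
    have "E - {A} \<subseteq> C"
      using Y(2) C(1) unfolding is_meet_def by simp
    moreover have "C \<subseteq> E"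
      using Y(1) C(1) unfolding L_def by auto
    ultimately have "C = E - {A}"
      using C(2) by auto
    with C(1) show ?thesis by simp
  qed
  have "meet_irreducible L (E - {A})"
    unfolding meet_irreducible_def using \<open>E - {A} \<in> L\<close> not_top meet_member by simp
  moreover have "\<not> meet_irreducible L C" if "E - {A} \<subset> C" for C
  proof -
    have "C \<in> L \<Longrightarrow> C = E"
      using that \<open>A \<in> E\<close> unfolding L_def by auto
    then show ?thesis
      unfolding meet_irreducible_def top by auto
  qed
  ultimately show ?thesis
    unfolding maximal_meet_irreducible_def by auto
qed

theorem proposition5:
  fixes G :: "'g set" and M :: "'m set" and I :: "('g \<times> 'm) set" and A B :: "'g set"
  assumes "formal_context G M I"
    and "A \<in> Ext G M I" and "B \<in> Ext G M I"
    and "covers (Ext G M I) A B"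
    and "meet_irreducible (Ext G M I) A"
  shows "maximal_meet_irreducible (down_Ext G M I) (F_AB G A B \<inter> Ext G M I)"
proof -
  let ?E = "Ext G M I"
  have F_eq: "F_AB G A B \<inter> ?E = ?E - {A}"
    using F_AB_Int_eq_Diff[OF closure_system_Ext assms(4,5)] .
  have "B \<subseteq> G"
    using assms(3) unfolding Ext_def by blast
  then have "closure_system G (F_AB G A B \<inter> ?E)"
    using closure_system_Inter[of "{F_AB G A B, ?E}" G]
      closure_system_F_AB[of B G A] closure_system_Ext[of G M I]
    by auto
  then have "maximal_meet_irreducible {C. closure_system G C \<and> C \<subseteq> ?E} (?E - {A})"
    using maximal_meet_irreducible_Diff[OF closure_system_Ext assms(2)] F_eq by simp
  then show ?thesis
    unfolding down_Ext_def F_eq .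
qed

end
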